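(* Let $\Gamma_1,\Gamma_2$ be disjoint sets of unary letters and consider the following nondeterministic procedure on a context equation $u = v$. First, for each context variable $X$: guess a letter $a$ (intended as the last letter of a solution's value for $X$); if $a\in\Gamma_1$, replace every occurrence of $X$ by $Xa$ (i.e. each $X(s)$ by $X(a(s))$), and then guess whether $X$ is to be removed, in which case replace every $X(s)$ by $s$. Second, for each context variable $X$ and each variable $x$: guess a letter $b$ (intended as its first letter); if $b\in\Gamma_2$, replace every occurrence of $X$ by $bX$ (each $X(s)$ by $b(X(s))$), respectively every $x$ by $b(x)$, and then (for context variables) guess whether $X$ is to be removed, in which case replace each $X(s)$ by $s$. Then: (a) whatever the choices, if the resulting equation $u'=v'$ has a solution, so does $u=v$; (b) if $u=v$ has a non-empty solution $\sigma$, then for some choices the resulting equation $u'=v'$ has a non-empty solution $\sigma'$ such that $\sigma'(u')=\sigma(u)$ and $\Gamma_1,\Gamma_2$ is a non-crossing partition with respect to $\sigma'$.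
   Context: $\Sigma$ is a ranked signature, $\Omega\notin\Sigma$ a special constant; context variables have arity $1$, variables arity $0$. Ground terms, ground contexts (exactly one $\Omega$), terms and context equations $u=v$ are as usual; a substitution $\sigma$ assigns ground contexts to context variables and ground terms to variables, extended by $\sigma(a)=a$, $\sigma(f(t_1,\dots,t_m))=f(\sigma(t_1),\dots,\sigma(t_m))$, $\sigma(Xt)=\sigma(X)\sigma(t)$; a solution satisfies $\sigma(u)=\sigma(v)$; it is non-empty if $\sigma(X)\neq\Omega$ for every context variable $X$ occurring in the equation. The first letter of $\sigma(X)$ or $\sigma(x)$ is the label of its root; the last letter of $\sigma(X)$ is the label of the father of $\Omega$. Each node of $\sigma(u)$ comes either from an explicit letter occurrence of $u$ or from $\sigma(X)$ or $\sigma(x)$ for a particular occurrence of $X$ or $x$. An occurrence in $\sigma(u)$ or $\sigma(v)$ of a node labelled $a$ with child labelled $b$ is explicit if both come from explicit letters, implicit if both come from the same $\sigma(X)$ or $\sigma(x)$, and crossing otherwise. $\Gamma_1,\Gamma_2$ is non-crossing w.r.t. $\sigma$ if no $a\in\Gamma_1$, $b\in\Gamma_2$ have a crossing occurrence of $ab$. *)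

theory Defs
  imports Main
begin

text \<open>Letters of the ranked signature have type 'f, with rank function ar.
  The special constant Omega (not in the signature) is the constructor Hole.\<close>

datatype 'f gtree = Hole | Node 'f "'f gtree list"

fun wf_gt :: "('f \<Rightarrow> nat) \<Rightarrow> 'f gtree \<Rightarrow> bool" where
  "wf_gt ar Hole = True"
| "wf_gt ar (Node f ts) = (length ts = ar f \<and> (\<forall>t\<in>set ts. wf_gt ar t))"

fun nholes :: "'f gtree \<Rightarrow> nat" where
  "nholes Hole = 1"
| "nholes (Node f ts) = sum_list (map nholes ts)"

definition ground_term :: "('f \<Rightarrow> nat) \<Rightarrow> 'f gtree \<Rightarrow> bool" where
  "ground_term ar t \<longleftrightarrow> wf_gt ar t \<and> nholes t = 0"

definition ground_ctxt :: "('f \<Rightarrow> nat) \<Rightarrow> 'f gtree \<Rightarrow> bool" where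
  "ground_ctxt ar C \<longleftrightarrow> wf_gt ar C \<and> nholes C = 1"

fun fill :: "'f gtree \<Rightarrow> 'f gtree \<Rightarrow> 'f gtree" where
  "fill Hole s = s"
| "fill (Node f ts) s = Node f (map (\<lambda>t. fill t s) ts)"

datatype ('f, 'c, 'v) trm =
    TVar 'v
  | TCtx 'c "('f, 'c, 'v) trm"
  | TFun 'f "('f, 'c, 'v) trm list"

fun wf_trm :: "('f \<Rightarrow> nat) \<Rightarrow> ('f, 'c, 'v) trm \<Rightarrow> bool" where
  "wf_trm ar (TVar x) = True"
| "wf_trm ar (TCtx X t) = wf_trm ar t"
| "wf_trm ar (TFun f ts) = (length ts = ar f \<and> (\<forall>t\<in>set ts. wf_trm ar t))"

fun cvars :: "('f, 'c, 'v) trm \<Rightarrow> 'c set" where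
  "cvars (TVar x) = {}"
| "cvars (TCtx X t) = insert X (cvars t)"
| "cvars (TFun f ts) = (\<Union>t\<in>set ts. cvars t)"

fun vars :: "('f, 'c, 'v) trm \<Rightarrow> 'v set" where
  "vars (TVar x) = {x}"
| "vars (TCtx X t) = vars t"
| "vars (TFun f ts) = (\<Union>t\<in>set ts. vars t)"

fun inst :: "('c \<Rightarrow> 'f gtree) \<Rightarrow> ('v \<Rightarrow> 'f gtree) \<Rightarrow> ('f, 'c, 'v) trm \<Rightarrow> 'f gtree" where
  "inst sc sv (TVar x) = sv x"
| "inst sc sv (TCtx X t) = fill (sc X) (inst sc sv t)"
| "inst sc sv (TFun f ts) = Node f (map (inst sc sv) ts)"

definition is_subst_for ::
  "('f \<Rightarrow> nat) \<Rightarrow> ('c \<Rightarrow> 'f gtree) \<Rightarrow> ('v \<Rightarrow> 'f gtree) \<Rightarrow> ('f, 'c, 'v) trm \<Rightarrow> ('f, 'c, 'v) trm \<Rightarrow> bool" where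
  "is_subst_for ar sc sv u v \<longleftrightarrow>
     (\<forall>X \<in> cvars u \<union> cvars v. ground_ctxt ar (sc X)) \<and>
     (\<forall>x \<in> vars u \<union> vars v. ground_term ar (sv x))"

definition is_solution ::
  "('f \<Rightarrow> nat) \<Rightarrow> ('c \<Rightarrow> 'f gtree) \<Rightarrow> ('v \<Rightarrow> 'f gtree) \<Rightarrow> ('f, 'c, 'v) trm \<Rightarrow> ('f, 'c, 'v) trm \<Rightarrow> bool" where
  "is_solution ar sc sv u v \<longleftrightarrow> is_subst_for ar sc sv u v \<and> inst sc sv u = inst sc sv v"

definition is_nonempty_solution ::
  "('f \<Rightarrow> nat) \<Rightarrow> ('c \<Rightarrow> 'f gtree) \<Rightarrow> ('v \<Rightarrow> 'f gtree) \<Rightarrow> ('f, 'c, 'v) trm \<Rightarrow> ('f, 'c, 'v) trm \<Rightarrow> bool" where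
  "is_nonempty_solution ar sc sv u v \<longleftrightarrow>
     is_solution ar sc sv u v \<and> (\<forall>X \<in> cvars u \<union> cvars v. sc X \<noteq> Hole)"

text \<open>Annotated ground trees: every node carries its origin. Origin None means the
  node comes from an explicit letter of the term; Some p means it comes from the value
  of the (context) variable occurring at position p of the term.\<close>

datatype ('f, 'o) atree = AHole | ANode 'f 'o "('f, 'o) atree list"

fun ann :: "'o \<Rightarrow> 'f gtree \<Rightarrow> ('f, 'o) atree" where
  "ann o' Hole = AHole"
| "ann o' (Node f ts) = ANode f o' (map (ann o') ts)"

fun afill :: "('f, 'o) atree \<Rightarrow> ('f, 'o) atree \<Rightarrow> ('f, 'o) atree" where
  "afill AHole s = s"
| "afill (ANode f o' ts) s = ANode f o' (map (\<lambda>t. afill t s) ts)"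

function ainst :: "('c \<Rightarrow> 'f gtree) \<Rightarrow> ('v \<Rightarrow> 'f gtree) \<Rightarrow> nat list \<Rightarrow> ('f, 'c, 'v) trm
    \<Rightarrow> ('f, nat list option) atree" where
  "ainst sc sv p (TVar x) = ann (Some p) (sv x)"
| "ainst sc sv p (TCtx X t) = afill (ann (Some p) (sc X)) (ainst sc sv (p @ [0]) t)"
| "ainst sc sv p (TFun f ts) =
     ANode f None (map (\<lambda>(i, t). ainst sc sv (p @ [i]) t) (zip [0..<length ts] ts))"
  by pat_completeness auto
termination
  by (relation "measure (\<lambda>(_, _, _, t). size t)")
     (auto dest!: set_zip_rightD simp: less_Suc_eq_le size_list_estimation')

fun aedges :: "('f, 'o) atree \<Rightarrow> ('f \<times> 'o \<times> 'f \<times> 'o) set" where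
  "aedges AHole = {}"
| "aedges (ANode f o' ts) =
     {(f, o', g, o'') | g o'' ts'. ANode g o'' ts' \<in> set ts} \<union> (\<Union>t\<in>set ts. aedges t)"

text \<open>An occurrence is explicit if both nodes have origin None, implicit if both come
  from the same occurrence Some p, crossing otherwise, i.e. iff the origins differ.\<close>
definition non_crossing ::
  "'f set \<Rightarrow> 'f set \<Rightarrow> ('c \<Rightarrow> 'f gtree) \<Rightarrow> ('v \<Rightarrow> 'f gtree) \<Rightarrow> ('f, 'c, 'v) trm \<Rightarrow> ('f, 'c, 'v) trm \<Rightarrow> bool" where
  "non_crossing G1 G2 sc sv u v \<longleftrightarrow>
     (\<forall>(a, o1, b, o2) \<in> aedges (ainst sc sv [] u) \<union> aedges (ainst sc sv [] v).
        a \<in> G1 \<longrightarrow> b \<in> G2 \<longrightarrow> o1 = o2)"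

text \<open>Stage 1 (popping last letters from Gamma1): la X is the guessed last letter of X,
  rem X whether X is removed (only relevant when la X is in G1).\<close>
fun pop_last :: "'f set \<Rightarrow> ('c \<Rightarrow> 'f) \<Rightarrow> ('c \<Rightarrow> bool) \<Rightarrow> ('f, 'c, 'v) trm \<Rightarrow> ('f, 'c, 'v) trm" where
  "pop_last G1 la rem (TVar x) = TVar x"
| "pop_last G1 la rem (TCtx X t) =
     (let t' = pop_last G1 la rem t in
      if la X \<in> G1 then (if rem X then TFun (la X) [t'] else TCtx X (TFun (la X) [t']))
      else TCtx X t')"
| "pop_last G1 la rem (TFun f ts) = TFun f (map (pop_last G1 la rem) ts)"

text \<open>Stage 2 (popping first letters from Gamma2): fc X / fv x are the guessed first
  letters of X / x, rem X whether X is removed (only relevant when fc X is in G2).\<close>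
fun pop_first :: "'f set \<Rightarrow> ('c \<Rightarrow> 'f) \<Rightarrow> ('c \<Rightarrow> bool) \<Rightarrow> ('v \<Rightarrow> 'f) \<Rightarrow> ('f, 'c, 'v) trm \<Rightarrow> ('f, 'c, 'v) trm" where
  "pop_first G2 fc rem fv (TVar x) = (if fv x \<in> G2 then TFun (fv x) [TVar x] else TVar x)"
| "pop_first G2 fc rem fv (TCtx X t) =
     (let t' = pop_first G2 fc rem fv t in
      if fc X \<in> G2 then (if rem X then TFun (fc X) [t'] else TFun (fc X) [TCtx X t'])
      else TCtx X t')"
| "pop_first G2 fc rem fv (TFun f ts) = TFun f (map (pop_first G2 fc rem fv) ts)"

definition transform ::
  "'f set \<Rightarrow> 'f set \<Rightarrow> ('c \<Rightarrow> 'f) \<Rightarrow> ('c \<Rightarrow> bool) \<Rightarrow> ('c \<Rightarrow> 'f) \<Rightarrow> ('c \<Rightarrow> bool) \<Rightarrow> ('v \<Rightarrow> 'f)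
     \<Rightarrow> ('f, 'c, 'v) trm \<Rightarrow> ('f, 'c, 'v) trm" where
  "transform G1 G2 la rem1 fc rem2 fv t = pop_first G2 fc rem2 fv (pop_last G1 la rem1 t)"

end

theory Submission
  imports Defs
begin

text \<open>
  (a) Each guess replaces a context variable X by Xa or bX (or by the bare letter) and a
  variable x by bx, so a solution of the transformed equation is turned back into one of the
  original equation by putting these letters into the values: \<sigma>(X) = \<sigma>'(X)a, b\<sigma>'(X) and
  \<sigma>(x) = b\<sigma>'(x).

  (b) Conversely, for a non-empty solution \<sigma> guess the true last letter of \<sigma>(X) and the true
  first letters of \<sigma>(X) and \<sigma>(x), and strip them from the values when they lie in G1 resp. G2
  (removing X when nothing is left). A crossing pair ab with a \<in> G1, b \<in> G2 either leaves the
  father of the hole of some \<sigma>'(X) or enters the root of some \<sigma>'(X), \<sigma>'(x). After the first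
  stage a hole father in G1 is always followed by the explicit popped letter, which lies in G1
  and hence not in G2; after the second stage a root in G2 is always preceded by an explicit
  letter of G2, hence not by one of G1.
\<close>

lemma fill_assoc: "fill (fill C D) s = fill C (fill D s)"
  by (induction C) auto

lemma wf_gt_fillD: "wf_gt ar (fill C s) \<Longrightarrow> wf_gt ar C"
  by (induction C) auto

lemma wf_gt_fill: "wf_gt ar C \<Longrightarrow> wf_gt ar s \<Longrightarrow> wf_gt ar (fill C s)"
  by (induction C) auto

lemma nholes_fill: "nholes (fill C s) = nholes C * nholes s"
proof (induction C)
  case (Node f ts)
  have "sum_list (map (\<lambda>t. nholes (fill t s)) ts) = sum_list (map (\<lambda>t. nholes t * nholes s) ts)"
    using Node by (intro arg_cong[where f = sum_list] map_cong) auto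
  also have "sum_list (map (\<lambda>t. nholes t * nholes s) ts) = sum_list (map nholes ts) * nholes s"
    by (induction ts) (auto simp: algebra_simps)
  finally show ?case by (simp add: o_def)
qed simp

lemma ground_ctxt_fill: "ground_ctxt ar C \<Longrightarrow> ground_ctxt ar D \<Longrightarrow> ground_ctxt ar (fill C D)"
  by (simp add: ground_ctxt_def wf_gt_fill nholes_fill)

lemma ground_ctxt_fillD: "ground_ctxt ar (fill C D) \<Longrightarrow> nholes D = 1 \<Longrightarrow> ground_ctxt ar C"
  by (simp add: ground_ctxt_def nholes_fill wf_gt_fillD[of ar C D])

lemma ground_ctxt_Hole: "ground_ctxt ar Hole"
  by (simp add: ground_ctxt_def)

lemma ground_term_not_Hole: "ground_term ar t \<Longrightarrow> t \<noteq> Hole"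
  by (auto simp: ground_term_def)

lemma ground_ctxt_unary_Node_iff: "ground_ctxt ar (Node a [C]) \<longleftrightarrow> ar a = 1 \<and> ground_ctxt ar C"
  by (auto simp: ground_ctxt_def)

lemma ground_term_unary_Node_iff: "ground_term ar (Node a [t]) \<longleftrightarrow> ar a = 1 \<and> ground_term ar t"
  by (auto simp: ground_term_def)

fun hole_parents :: "'f gtree \<Rightarrow> 'f set" where
  "hole_parents Hole = {}"
| "hole_parents (Node f ts) = (if Hole \<in> set ts then {f} else {}) \<union> (\<Union>t\<in>set ts. hole_parents t)"

lemma hole_parents_no_holes: "nholes C = 0 \<Longrightarrow> hole_parents C = {}"
proof (induction C)
  case (Node f ts)
  then have "\<forall>t\<in>set ts. nholes t = 0" by (simp add: sum_list_eq_0_iff)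
  moreover from this have "Hole \<notin> set ts" by force
  ultimately show ?case using Node by auto
qed simp

lemma sum_list_eq_1_split:
  fixes ts :: "'a list" and n :: "'a \<Rightarrow> nat"
  assumes "sum_list (map n ts) = 1"
  shows "\<exists>l t r. ts = l @ t # r \<and> n t = 1 \<and> (\<forall>s\<in>set l \<union> set r. n s = 0)"
  using assms
proof (induction ts)
  case (Cons a ts)
  show ?case
  proof (cases "n a")
    case 0
    with Cons obtain l t r where "ts = l @ t # r" "n t = 1" "\<forall>s\<in>set l \<union> set r. n s = 0" by auto
    with 0 show ?thesis by (intro exI[of _ "a # l"]) auto
  next
    case (Suc m)
    with Cons.prems show ?thesis by (intro exI[of _ "[]"]) auto
  qed
qed simp

lemma hole_parents_one_hole: "nholes C = 1 \<Longrightarrow> C \<noteq> Hole \<Longrightarrow> \<exists>a. hole_parents C = {a}"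
proof (induction C)
  case (Node f ts)
  then obtain l t r where split: "ts = l @ t # r" "nholes t = 1" "\<forall>s\<in>set l \<union> set r. nholes s = 0"
    using sum_list_eq_1_split[of nholes ts] by auto
  have rest: "hole_parents s = {} \<and> s \<noteq> Hole" if "s \<in> set l \<union> set r" for s
  proof -
    have "nholes s = 0" using split(3) that by blast
    then show ?thesis using hole_parents_no_holes by auto
  qed
  show ?case
  proof (cases "t = Hole")
    case False
    with Node.IH[of t] split obtain a where "hole_parents t = {a}" by auto
    with split rest False show ?thesis by (intro exI[of _ a]) auto
  qed (use split rest in auto)
qed simp

definition last_letter :: "'f gtree \<Rightarrow> 'f" where
  "last_letter C = (THE a. hole_parents C = {a})"

lemma hole_parents_ground_ctxt:
  "ground_ctxt ar C \<Longrightarrow> C \<noteq> Hole \<Longrightarrow> hole_parents C = {last_letter C}"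
  using hole_parents_one_hole[of C] by (auto simp: ground_ctxt_def last_letter_def)

fun drop_hole_parent :: "'f gtree \<Rightarrow> 'f gtree" where
  "drop_hole_parent Hole = Hole"
| "drop_hole_parent (Node f ts) = (if ts = [Hole] then Hole else Node f (map drop_hole_parent ts))"

lemma fill_drop_hole_parent:
  assumes "wf_gt ar C" "hole_parents C \<subseteq> {a}" "ar a = 1" "C \<noteq> Hole"
  shows "C = fill (drop_hole_parent C) (Node a [Hole])"
  using assms
proof (induction C)
  case (Node f ts)
  show ?case
  proof (cases "ts = [Hole]")
    case True
    with Node.prems(2) show ?thesis by simp
  next
    case False
    have "Hole \<notin> set ts"
    proof
      assume "Hole \<in> set ts"
      with Node.prems have "f = a" by auto
      with \<open>Hole \<in> set ts\<close> Node.prems(1,3) have "ts = [Hole]"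
        by (cases ts) auto
      with False show False ..
    qed
    have "fill (drop_hole_parent t) (Node a [Hole]) = t" if "t \<in> set ts" for t
    proof (rule sym, rule Node.IH[OF that])
      show "wf_gt ar t" "hole_parents t \<subseteq> {a}"
        using Node.prems(1,2) that by auto
      show "ar a = 1" by (fact Node.prems(3))
      show "t \<noteq> Hole" using \<open>Hole \<notin> set ts\<close> that by blast
    qed
    then have "map (\<lambda>t. fill (drop_hole_parent t) (Node a [Hole])) ts = ts"
      by (rule map_idI)
    with False show ?thesis by (simp add: o_def)
  qed
qed simp

definition pop_last_letter :: "'f set \<Rightarrow> 'f gtree \<Rightarrow> 'f gtree" where
  "pop_last_letter G C = (if last_letter C \<in> G then drop_hole_parent C else C)"

lemma fill_pop_last_letter:
  assumes "ground_ctxt ar C" "C \<noteq> Hole" "last_letter C \<in> G" "ar (last_letter C) = 1"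
  shows "C = fill (pop_last_letter G C) (Node (last_letter C) [Hole])"
  using assms fill_drop_hole_parent[of ar C "last_letter C"] hole_parents_ground_ctxt[of ar C]
  by (auto simp: pop_last_letter_def ground_ctxt_def)

lemma ground_ctxt_pop_last_letter:
  assumes "ground_ctxt ar C" "C \<noteq> Hole" "\<forall>a\<in>G. ar a = 1"
  shows "ground_ctxt ar (pop_last_letter G C)"
proof (cases "last_letter C \<in> G")
  case True
  with assms have "fill (pop_last_letter G C) (Node (last_letter C) [Hole]) = C"
    by (metis fill_pop_last_letter)
  moreover have "nholes (Node (last_letter C) [Hole]) = 1" by simp
  ultimately show ?thesis using assms(1) by (metis ground_ctxt_fillD)
qed (use assms in \<open>simp add: pop_last_letter_def\<close>)

fun root_label :: "'f gtree \<Rightarrow> 'f" where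
  "root_label (Node f ts) = f"

fun pop_root :: "'f set \<Rightarrow> 'f gtree \<Rightarrow> 'f gtree" where
  "pop_root G (Node f [t]) = (if f \<in> G then t else Node f [t])"
| "pop_root G t = t"

lemma pop_root_unary:
  assumes "wf_gt ar t" "t \<noteq> Hole" "\<forall>a\<in>G. ar a = 1"
  shows "t = (if root_label t \<in> G then Node (root_label t) [pop_root G t] else pop_root G t)"
  using assms by (induction G t rule: pop_root.induct) auto

lemma hole_parents_pop_root: "hole_parents (pop_root G C) \<subseteq> hole_parents C"
  by (induction G C rule: pop_root.induct) auto

lemma Node_root_label: "t \<noteq> Hole \<Longrightarrow> \<exists>ts. t = Node (root_label t) ts"
  by (cases t) auto

section \<open>Solutions of the transformed equation\<close>

lemma cvars_pop_last: "cvars (pop_last G la rem t) = {X \<in> cvars t. \<not> (la X \<in> G \<and> rem X)}"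
  by (induction t) (auto simp: Let_def)

lemma vars_pop_last: "vars (pop_last G la rem t) = vars t"
  by (induction t) (auto simp: Let_def)

lemma cvars_pop_first: "cvars (pop_first G fc rem fv t) = {X \<in> cvars t. \<not> (fc X \<in> G \<and> rem X)}"
  by (induction t) (auto simp: Let_def)

lemma vars_pop_first: "vars (pop_first G fc rem fv t) = vars t"
  by (induction t) (auto simp: Let_def)

lemma inst_pop_last:
  assumes "\<forall>X\<in>cvars t. sc X = (if la X \<in> G then if rem X then Node (la X) [Hole]
      else fill (sc1 X) (Node (la X) [Hole]) else sc1 X)"
  shows "inst sc sv t = inst sc1 sv (pop_last G la rem t)"
  using assms by (induction t) (auto simp: Let_def fill_assoc)

lemma inst_pop_first:
  assumes "\<forall>X\<in>cvars t. sc X = (if fc X \<in> G then if rem X then Node (fc X) [Hole]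
      else Node (fc X) [sc' X] else sc' X)"
    and "\<forall>x\<in>vars t. sv x = (if fv x \<in> G then Node (fv x) [sv' x] else sv' x)"
  shows "inst sc sv t = inst sc' sv' (pop_first G fc rem fv t)"
  using assms by (induction t) (auto simp: Let_def)

lemma solution_of_transformed_solution:
  assumes unary: "\<forall>a \<in> G1 \<union> G2. ar a = 1"
    and sol: "is_solution ar sc' sv'
      (transform G1 G2 la rem1 fc rem2 fv u) (transform G1 G2 la rem1 fc rem2 fv v)"
  shows "\<exists>sc sv. is_solution ar sc sv u v"
proof -
  define sc1 where "sc1 X = (if fc X \<in> G2 then if rem2 X then Node (fc X) [Hole]
      else Node (fc X) [sc' X] else sc' X)" for X
  define sc where "sc X = (if la X \<in> G1 then if rem1 X then Node (la X) [Hole]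
      else fill (sc1 X) (Node (la X) [Hole]) else sc1 X)" for X
  define sv where "sv x = (if fv x \<in> G2 then Node (fv x) [sv' x] else sv' x)" for x
  have inst_eq: "inst sc sv t = inst sc' sv' (transform G1 G2 la rem1 fc rem2 fv t)" for t
  proof -
    have "inst sc sv t = inst sc1 sv (pop_last G1 la rem1 t)"
      by (rule inst_pop_last) (simp add: sc_def)
    also have "\<dots> = inst sc' sv' (transform G1 G2 la rem1 fc rem2 fv t)"
      unfolding transform_def by (rule inst_pop_first) (simp_all add: sc1_def sv_def)
    finally show ?thesis .
  qed
  have sc': "ground_ctxt ar (sc' X)" if "X \<in> cvars (transform G1 G2 la rem1 fc rem2 fv t)"
    "t \<in> {u, v}" for X t
    using sol that by (auto simp: is_solution_def is_subst_for_def)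
  have sv': "ground_term ar (sv' x)" if "x \<in> vars u \<union> vars v" for x
    using sol that
    by (auto simp: is_solution_def is_subst_for_def transform_def vars_pop_first vars_pop_last)
  have "ground_ctxt ar (sc X)" if "X \<in> cvars t" "t \<in> {u, v}" for X t
    using that sc'[of X t] unary
    by (auto simp: sc_def sc1_def transform_def cvars_pop_first cvars_pop_last
        ground_ctxt_unary_Node_iff ground_ctxt_Hole intro!: ground_ctxt_fill)
  moreover have "ground_term ar (sv x)" if "x \<in> vars u \<union> vars v" for x
    using sv'[OF that] unary by (auto simp: sv_def ground_term_unary_Node_iff)
  ultimately have "is_solution ar sc sv u v"
    using sol by (auto simp: is_solution_def is_subst_for_def inst_eq)
  then show ?thesis by blast
qed

section \<open>Origins of nodes and crossing pairs\<close>

fun ahole_parents :: "('f, 'o) atree \<Rightarrow> ('f \<times> 'o) set" where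
  "ahole_parents AHole = {}"
| "ahole_parents (ANode f o' ts) =
     (if AHole \<in> set ts then {(f, o')} else {}) \<union> (\<Union>t\<in>set ts. ahole_parents t)"

lemma ann_eq_AHole_iff: "ann o' t = AHole \<longleftrightarrow> t = Hole"
  by (cases t) auto

lemma ahole_parents_ann: "ahole_parents (ann o' C) = (\<lambda>f. (f, o')) ` hole_parents C"
proof (induction C)
  case (Node f ts)
  have "AHole \<in> set (map (ann o') ts) \<longleftrightarrow> Hole \<in> set ts"
    by (auto simp: image_iff ann_eq_AHole_iff eq_commute[of AHole])
  then show ?case using Node by auto
qed simp

lemma ann_eq_ANodeD: "ann o' t = ANode g o'' ts \<Longrightarrow> o'' = o'"
  by (cases t) auto

lemma aedges_ann: "(a, o1, b, o2) \<in> aedges (ann o' C) \<Longrightarrow> o1 = o' \<and> o2 = o'"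
  by (induction C) (auto dest: ann_eq_ANodeD[OF sym])

lemma aedges_afill:
  "aedges (afill A s) \<subseteq> aedges A \<union> aedges s \<union>
     {(a, o1, b, o2) | a o1 b o2 ts. (a, o1) \<in> ahole_parents A \<and> s = ANode b o2 ts}"
proof (induction A)
  case (ANode f o' ts)
  show ?case
  proof
    fix e assume "e \<in> aedges (afill (ANode f o' ts) s)"
    then consider (child) g o'' ts' t
        where "e = (f, o', g, o'')" "t \<in> set ts" "afill t s = ANode g o'' ts'"
      | (below) t where "t \<in> set ts" "e \<in> aedges (afill t s)"
      by (auto; metis)
    then show "e \<in> aedges (ANode f o' ts) \<union> aedges s \<union>
      {(a, o1, b, o2) | a o1 b o2 ts'.
         (a, o1) \<in> ahole_parents (ANode f o' ts) \<and> s = ANode b o2 ts'}"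
    proof cases
      case child
      then show ?thesis by (cases t) auto
    next
      case below
      then show ?thesis using ANode.IH[OF below(1)] by auto
    qed
  qed
qed simp

definition non_crossing_atree :: "'f set \<Rightarrow> 'f set \<Rightarrow> ('f, 'o) atree \<Rightarrow> bool" where
  "non_crossing_atree G1 G2 s \<longleftrightarrow> (\<forall>(a, o1, b, o2) \<in> aedges s. a \<in> G1 \<longrightarrow> b \<in> G2 \<longrightarrow> o1 = o2)"

lemma non_crossing_iff:
  "non_crossing G1 G2 sc sv u v \<longleftrightarrow>
     non_crossing_atree G1 G2 (ainst sc sv [] u) \<and> non_crossing_atree G1 G2 (ainst sc sv [] v)"
  unfolding non_crossing_def non_crossing_atree_def by (rule ball_Un)

text \<open>Sufficient syntactic conditions for the absence of crossing pairs ab with a \<in> G1,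
  b \<in> G2: a context value whose hole father may lie in G1 is applied to an explicit letter
  outside G2 (\<open>guarded_last\<close>), and below an explicit letter of G1 every root in G2 is
  explicit (\<open>explicit_under\<close>).\<close>

definition explicit_root ::
    "'f set \<Rightarrow> ('c \<Rightarrow> 'f gtree) \<Rightarrow> ('v \<Rightarrow> 'f gtree) \<Rightarrow> ('f, 'c, 'v) trm \<Rightarrow> bool" where
  "explicit_root G sc sv t \<longleftrightarrow>
     (\<forall>p g o' ts. ainst sc sv p t = ANode g o' ts \<longrightarrow> g \<in> G \<longrightarrow> o' = None)"

lemma explicit_root_TFun: "explicit_root G sc sv (TFun f ts)"
  by (simp add: explicit_root_def)

fun guarded_last :: "'f set \<Rightarrow> 'f set \<Rightarrow> ('c \<Rightarrow> 'f gtree) \<Rightarrow> ('f, 'c, 'v) trm \<Rightarrow> bool" where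
  "guarded_last G1 G2 sc (TVar x) = True"
| "guarded_last G1 G2 sc (TCtx X t) = (guarded_last G1 G2 sc t \<and>
     (hole_parents (sc X) \<inter> G1 \<noteq> {} \<longrightarrow> (\<exists>a ts. t = TFun a ts \<and> a \<notin> G2)))"
| "guarded_last G1 G2 sc (TFun f ts) = (\<forall>t\<in>set ts. guarded_last G1 G2 sc t)"

fun explicit_under ::
    "'f set \<Rightarrow> 'f set \<Rightarrow> ('c \<Rightarrow> 'f gtree) \<Rightarrow> ('v \<Rightarrow> 'f gtree) \<Rightarrow> ('f, 'c, 'v) trm \<Rightarrow> bool" where
  "explicit_under G1 G2 sc sv (TVar x) = True"
| "explicit_under G1 G2 sc sv (TCtx X t) = explicit_under G1 G2 sc sv t"
| "explicit_under G1 G2 sc sv (TFun f ts) =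
     (\<forall>t\<in>set ts. explicit_under G1 G2 sc sv t \<and> (f \<in> G1 \<longrightarrow> explicit_root G2 sc sv t))"

lemma non_crossing_ainst:
  "guarded_last G1 G2 sc t \<Longrightarrow> explicit_under G1 G2 sc sv t \<Longrightarrow>
   non_crossing_atree G1 G2 (ainst sc sv p t)"
proof (induction sc sv p t rule: ainst.induct)
  case (1 sc sv p x)
  then show ?case by (auto simp: non_crossing_atree_def dest: aedges_ann)
next
  case (2 sc sv p X t)
  show ?case unfolding non_crossing_atree_def
  proof (clarify)
    fix a o1 b o2
    assume e: "(a, o1, b, o2) \<in> aedges (ainst sc sv p (TCtx X t))" and ab: "a \<in> G1" "b \<in> G2"
    from e consider "(a, o1, b, o2) \<in> aedges (ann (Some p) (sc X))"
      | "(a, o1, b, o2) \<in> aedges (ainst sc sv (p @ [0]) t)"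
      | ts where "(a, o1) \<in> ahole_parents (ann (Some p) (sc X))"
          "ainst sc sv (p @ [0]) t = ANode b o2 ts"
      using aedges_afill by fastforce
    then show "o1 = o2"
    proof cases
      case 1
      then show ?thesis by (auto dest: aedges_ann)
    next
      case 2
      then show ?thesis using "2.IH" "2.prems" ab by (auto simp: non_crossing_atree_def)
    next
      case 3
      then have "a \<in> hole_parents (sc X)" by (auto simp: ahole_parents_ann)
      then obtain c ts where "t = TFun c ts" "c \<notin> G2" using "2.prems"(1) ab by auto
      then show ?thesis using 3 ab by auto
    qed
  qed
next
  case (3 sc sv p f ts)
  show ?case unfolding non_crossing_atree_def
  proof (clarify)
    fix a o1 b o2
    assume e: "(a, o1, b, o2) \<in> aedges (ainst sc sv p (TFun f ts))" and ab: "a \<in> G1" "b \<in> G2"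
    then consider (child) i t ts' where "(i, t) \<in> set (zip [0..<length ts] ts)" "a = f" "o1 = None"
        "ainst sc sv (p @ [i]) t = ANode b o2 ts'"
      | (below) i t where "(i, t) \<in> set (zip [0..<length ts] ts)"
        "(a, o1, b, o2) \<in> aedges (ainst sc sv (p @ [i]) t)"
      by (auto; metis)
    then show "o1 = o2"
    proof cases
      case child
      then have "explicit_root G2 sc sv t" using "3.prems"(2) ab by (auto dest: set_zip_rightD)
      then show ?thesis using child ab by (auto simp: explicit_root_def)
    next
      case below
      have "t \<in> set ts" using below(1) by (rule set_zip_rightD)
      with below(1) have "non_crossing_atree G1 G2 (ainst sc sv (p @ [i]) t)"
        using "3.IH" "3.prems" by auto
      then show ?thesis using below ab by (auto simp: non_crossing_atree_def)
    qed
  qed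
qed

lemma guarded_last_pop_last:
  assumes "G1 \<inter> G2 = {}" "\<forall>X\<in>cvars t. la X \<notin> G1 \<longrightarrow> hole_parents (sc X) \<inter> G1 = {}"
  shows "guarded_last G1 G2 sc (pop_last G1 la rem t)"
  using assms(2) by (induction t) (use assms(1) in \<open>auto simp: Let_def\<close>)

lemma guarded_last_mono:
  assumes "guarded_last G1 G2 sc t" "\<forall>X\<in>cvars t. hole_parents (sc' X) \<subseteq> hole_parents (sc X)"
  shows "guarded_last G1 G2 sc' t"
  using assms by (induction t) auto

lemma guarded_last_pop_first:
  "guarded_last G1 G2 sc t \<Longrightarrow> guarded_last G1 G2 sc (pop_first G2 fc rem fv t)"
  by (induction t) (auto simp: Let_def)

lemma explicit_under_pop_first:
  assumes "G1 \<inter> G2 = {}"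
    and "\<forall>x\<in>vars t. fv x \<notin> G2 \<longrightarrow> (\<forall>g ts. sv x = Node g ts \<longrightarrow> g \<notin> G2)"
    and "\<forall>X\<in>cvars t. fc X \<notin> G2 \<longrightarrow> (\<exists>g ts. sc X = Node g ts \<and> g \<notin> G2)"
  shows "explicit_under G1 G2 sc sv (pop_first G2 fc rem fv t)
    \<and> explicit_root G2 sc sv (pop_first G2 fc rem fv t)"
  using assms(2,3)
proof (induction t)
  case (TVar x)
  have "explicit_root G2 sc sv (TVar x)" if "fv x \<notin> G2"
    using TVar.prems(1) that by (auto simp: explicit_root_def elim!: ann.elims)
  with assms(1) show ?case by (auto simp: explicit_root_TFun)
next
  case (TCtx X t)
  then have IH: "explicit_under G1 G2 sc sv (pop_first G2 fc rem fv t)" by simp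
  have "explicit_root G2 sc sv (TCtx X s)" if "fc X \<notin> G2" for s
    using TCtx.prems(2) that by (auto simp: explicit_root_def)
  with IH assms(1) show ?case by (auto simp: Let_def explicit_root_TFun)
next
  case (TFun f ts)
  then show ?case by (auto simp: explicit_root_TFun)
qed

section \<open>Stripping the letters of a non-empty solution\<close>

lemma pop_last_stage:
  assumes disj: "G1 \<inter> G2 = {}" and unary: "\<forall>a\<in>G1. ar a = 1"
    and ground: "\<forall>X\<in>cvars t. ground_ctxt ar (sc X) \<and> sc X \<noteq> Hole"
  defines "la \<equiv> \<lambda>X. last_letter (sc X)"
    and "sc1 \<equiv> \<lambda>X. pop_last_letter G1 (sc X)"
    and "rem \<equiv> \<lambda>X. pop_last_letter G1 (sc X) = Hole"
  shows "inst sc sv t = inst sc1 sv (pop_last G1 la rem t)"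
    and "\<forall>X\<in>cvars (pop_last G1 la rem t). ground_ctxt ar (sc1 X) \<and> sc1 X \<noteq> Hole"
    and "guarded_last G1 G2 sc1 (pop_last G1 la rem t)"
proof -
  have rem_iff: "rem X \<longleftrightarrow> sc1 X = Hole" for X
    by (simp add: rem_def sc1_def)
  have "sc X = (if la X \<in> G1 then if rem X then Node (la X) [Hole]
      else fill (sc1 X) (Node (la X) [Hole]) else sc1 X)" if "X \<in> cvars t" for X
  proof (cases "la X \<in> G1")
    case True
    then have "sc X = fill (sc1 X) (Node (la X) [Hole])"
      using ground that unary fill_pop_last_letter[of ar "sc X" G1] by (simp add: la_def sc1_def)
    with True show ?thesis by (auto simp: rem_iff)
  qed (simp add: sc1_def pop_last_letter_def la_def)
  then show "inst sc sv t = inst sc1 sv (pop_last G1 la rem t)"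
    by (intro inst_pop_last ballI)
  show "\<forall>X\<in>cvars (pop_last G1 la rem t). ground_ctxt ar (sc1 X) \<and> sc1 X \<noteq> Hole"
  proof
    fix X assume "X \<in> cvars (pop_last G1 la rem t)"
    then have X: "X \<in> cvars t" "\<not> (la X \<in> G1 \<and> rem X)"
      by (simp_all add: cvars_pop_last)
    have "ground_ctxt ar (sc1 X)"
      using ground X(1) unary by (simp add: sc1_def ground_ctxt_pop_last_letter)
    moreover have "sc1 X \<noteq> Hole"
    proof (cases "la X \<in> G1")
      case True
      with X(2) show ?thesis by (simp add: rem_iff)
    next
      case False
      with ground X(1) show ?thesis by (simp add: sc1_def pop_last_letter_def la_def)
    qed
    ultimately show "ground_ctxt ar (sc1 X) \<and> sc1 X \<noteq> Hole" ..
  qed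
  have "hole_parents (sc1 X) \<inter> G1 = {}" if "X \<in> cvars t" "la X \<notin> G1" for X
    using ground that hole_parents_ground_ctxt[of ar "sc X"]
    by (simp add: la_def sc1_def pop_last_letter_def)
  then show "guarded_last G1 G2 sc1 (pop_last G1 la rem t)"
    using guarded_last_pop_last[OF disj] by (metis cvars_pop_last)
qed

lemma pop_first_stage:
  assumes disj: "G1 \<inter> G2 = {}" and unary: "\<forall>a\<in>G2. ar a = 1"
    and ground: "\<forall>X\<in>cvars t. ground_ctxt ar (sc X) \<and> sc X \<noteq> Hole"
    and ground_vars: "\<forall>x\<in>vars t. ground_term ar (sv x)"
    and guarded: "guarded_last G1 G2 sc t"
  defines "fc \<equiv> \<lambda>X. root_label (sc X)"
    and "sc' \<equiv> \<lambda>X. pop_root G2 (sc X)"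
    and "rem \<equiv> \<lambda>X. pop_root G2 (sc X) = Hole"
    and "fv \<equiv> \<lambda>x. root_label (sv x)"
    and "sv' \<equiv> \<lambda>x. pop_root G2 (sv x)"
  shows "inst sc sv t = inst sc' sv' (pop_first G2 fc rem fv t)"
    and "\<forall>X\<in>cvars (pop_first G2 fc rem fv t). ground_ctxt ar (sc' X) \<and> sc' X \<noteq> Hole"
    and "\<forall>x\<in>vars (pop_first G2 fc rem fv t). ground_term ar (sv' x)"
    and "non_crossing_atree G1 G2 (ainst sc' sv' p (pop_first G2 fc rem fv t))"
proof -
  have rem_iff: "rem X \<longleftrightarrow> sc' X = Hole" for X
    by (simp add: rem_def sc'_def)
  have sc: "sc X = (if fc X \<in> G2 then Node (fc X) [sc' X] else sc' X)" if "X \<in> cvars t" for X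
    unfolding fc_def sc'_def
    using ground that by (intro pop_root_unary[OF _ _ unary]) (auto simp: ground_ctxt_def)
  have sv: "sv x = (if fv x \<in> G2 then Node (fv x) [sv' x] else sv' x)" if "x \<in> vars t" for x
    unfolding fv_def sv'_def
    using ground_vars that ground_term_not_Hole
    by (intro pop_root_unary[OF _ _ unary]) (auto simp: ground_term_def)
  show "inst sc sv t = inst sc' sv' (pop_first G2 fc rem fv t)"
    using sc sv by (intro inst_pop_first) (auto simp: rem_iff)
  have sc'_ground: "ground_ctxt ar (sc' X)" if "X \<in> cvars t" for X
    using sc[OF that] ground that by (metis ground_ctxt_unary_Node_iff)
  have sc'_root: "\<exists>g ts. sc' X = Node g ts \<and> g \<notin> G2" if "X \<in> cvars t" "fc X \<notin> G2" for X
    using sc[OF that(1)] ground that Node_root_label[of "sc X"] by (auto simp: fc_def)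
  show "\<forall>X\<in>cvars (pop_first G2 fc rem fv t). ground_ctxt ar (sc' X) \<and> sc' X \<noteq> Hole"
    using sc'_ground sc'_root by (fastforce simp: cvars_pop_first rem_iff)
  show "\<forall>x\<in>vars (pop_first G2 fc rem fv t). ground_term ar (sv' x)"
    using sv ground_vars by (metis ground_term_unary_Node_iff vars_pop_first)
  have "guarded_last G1 G2 sc' (pop_first G2 fc rem fv t)"
    by (intro guarded_last_pop_first guarded_last_mono[OF guarded])
      (simp add: sc'_def hole_parents_pop_root)
  moreover have "explicit_under G1 G2 sc' sv' (pop_first G2 fc rem fv t)"
  proof (rule conjunct1[OF explicit_under_pop_first[OF disj]])
    show "\<forall>x\<in>vars t. fv x \<notin> G2 \<longrightarrow> (\<forall>g ts. sv' x = Node g ts \<longrightarrow> g \<notin> G2)"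
    proof (intro ballI impI allI)
      fix x g ts assume "x \<in> vars t" "fv x \<notin> G2" "sv' x = Node g ts"
      with sv have "sv x = Node g ts" by simp
      with \<open>fv x \<notin> G2\<close> show "g \<notin> G2" by (simp add: fv_def)
    qed
    show "\<forall>X\<in>cvars t. fc X \<notin> G2 \<longrightarrow> (\<exists>g ts. sc' X = Node g ts \<and> g \<notin> G2)"
      using sc'_root by blast
  qed
  ultimately show "non_crossing_atree G1 G2 (ainst sc' sv' p (pop_first G2 fc rem fv t))"
    by (rule non_crossing_ainst)
qed

lemma transformed_nonempty_solution:
  assumes disj: "G1 \<inter> G2 = {}" and unary: "\<forall>a \<in> G1 \<union> G2. ar a = 1"
    and sol: "is_nonempty_solution ar sc sv u v"
  shows "\<exists>la rem1 fc rem2 fv sc' sv'.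
           let u' = transform G1 G2 la rem1 fc rem2 fv u;
               v' = transform G1 G2 la rem1 fc rem2 fv v
           in is_nonempty_solution ar sc' sv' u' v'
              \<and> inst sc' sv' u' = inst sc sv u
              \<and> non_crossing G1 G2 sc' sv' u' v'"
proof -
  define la where "la = (\<lambda>X. last_letter (sc X))"
  define sc1 where "sc1 = (\<lambda>X. pop_last_letter G1 (sc X))"
  define rem1 where "rem1 = (\<lambda>X. pop_last_letter G1 (sc X) = Hole)"
  define fc where "fc = (\<lambda>X. root_label (sc1 X))"
  define sc' where "sc' = (\<lambda>X. pop_root G2 (sc1 X))"
  define rem2 where "rem2 = (\<lambda>X. pop_root G2 (sc1 X) = Hole)"
  define fv where "fv = (\<lambda>x. root_label (sv x))"
  define sv' where "sv' = (\<lambda>x. pop_root G2 (sv x))"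
  let ?T = "transform G1 G2 la rem1 fc rem2 fv"
  have unary1: "\<forall>a\<in>G1. ar a = 1" and unary2: "\<forall>a\<in>G2. ar a = 1"
    using unary by simp_all
  have transformed: "inst sc' sv' (?T t) = inst sc sv t
      \<and> (\<forall>X\<in>cvars (?T t). ground_ctxt ar (sc' X) \<and> sc' X \<noteq> Hole)
      \<and> (\<forall>x\<in>vars (?T t). ground_term ar (sv' x))
      \<and> non_crossing_atree G1 G2 (ainst sc' sv' [] (?T t))"
    if "cvars t \<subseteq> cvars u \<union> cvars v" "vars t \<subseteq> vars u \<union> vars v" for t
  proof -
    have ground: "\<forall>X\<in>cvars t. ground_ctxt ar (sc X) \<and> sc X \<noteq> Hole"
      and ground_vars: "\<forall>x\<in>vars (pop_last G1 la rem1 t). ground_term ar (sv x)"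
      using sol that
      by (auto simp: is_nonempty_solution_def is_solution_def is_subst_for_def vars_pop_last)
    note stage1 = pop_last_stage[OF disj unary1 ground]
    note stage2 = pop_first_stage[OF disj unary2 stage1(2)
        ground_vars[unfolded la_def rem1_def] stage1(3)]
    show ?thesis
      using stage1 stage2
      by (simp add: transform_def la_def sc1_def rem1_def fc_def sc'_def rem2_def fv_def sv'_def)
  qed
  have "is_nonempty_solution ar sc' sv' (?T u) (?T v) \<and> inst sc' sv' (?T u) = inst sc sv u
      \<and> non_crossing G1 G2 sc' sv' (?T u) (?T v)"
    using transformed[of u] transformed[of v] sol
    by (auto simp: is_nonempty_solution_def is_solution_def is_subst_for_def non_crossing_iff)
  then show ?thesis unfolding Let_def by blast
qed

theorem lemma5p1:
  fixes ar :: "'f \<Rightarrow> nat"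
    and G1 G2 :: "'f set"
    and u v :: "('f, 'c, 'v) trm"
  assumes "G1 \<inter> G2 = {}"
    and "\<forall>a \<in> G1 \<union> G2. ar a = 1"
    and "wf_trm ar u" and "wf_trm ar v"
  shows "(\<forall>la rem1 fc rem2 fv.
            (\<exists>sc' sv'. is_solution ar sc' sv'
                (transform G1 G2 la rem1 fc rem2 fv u) (transform G1 G2 la rem1 fc rem2 fv v))
            \<longrightarrow> (\<exists>sc sv. is_solution ar sc sv u v))
       \<and> (\<forall>sc sv. is_nonempty_solution ar sc sv u v \<longrightarrow>
            (\<exists>la rem1 fc rem2 fv sc' sv'.
               let u' = transform G1 G2 la rem1 fc rem2 fv u;
                   v' = transform G1 G2 la rem1 fc rem2 fv v
               in is_nonempty_solution ar sc' sv' u' v'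
                  \<and> inst sc' sv' u' = inst sc sv u
                  \<and> non_crossing G1 G2 sc' sv' u' v'))"
  using solution_of_transformed_solution[OF assms(2)] transformed_nonempty_solution[OF assms(1,2)]
  by blast

end
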